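(* Let $\lambda$ be a positive integer, $\psi_0\in\mathbb{R}$ and $G(\psi)=\cos(\lambda\psi+\psi_0)$. Then the function $$\left(p_r+\frac{p_\psi}{\lambda r}\frac{\partial}{\partial\psi}\right)^\lambda G(\psi)$$ (the operator in brackets applied $\lambda$ times to $G$) is a constant of motion of the geodesic Hamiltonian $H_g=\frac12\left(p_r^2+\frac{p_\psi^2}{r^2}\right)$.
   Context: Phase space coordinates are $(r,\psi,p_r,p_\psi)$ with $r>0$ (polar coordinates on the Euclidean plane) and canonical Poisson bracket; $p_r$, $p_\psi$, $1/(\lambda r)$ act by multiplication. A constant of motion is a function with vanishing Poisson bracket with the Hamiltonian. *)

theory Defs
  imports "HOL-Analysis.Analysis"
begin

text \<open>Phase-space functions of the coordinates (r, psi, p_r, p_psi), r > 0.\<close>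
type_synonym phfun = "real \<Rightarrow> real \<Rightarrow> real \<Rightarrow> real \<Rightarrow> real"

definition d_r :: "phfun \<Rightarrow> phfun" where
  "d_r f r ps pr pps = deriv (\<lambda>x. f x ps pr pps) r"
definition d_psi :: "phfun \<Rightarrow> phfun" where
  "d_psi f r ps pr pps = deriv (\<lambda>x. f r x pr pps) ps"
definition d_pr :: "phfun \<Rightarrow> phfun" where
  "d_pr f r ps pr pps = deriv (\<lambda>x. f r ps x pps) pr"
definition d_ppsi :: "phfun \<Rightarrow> phfun" where
  "d_ppsi f r ps pr pps = deriv (\<lambda>x. f r ps pr x) pps"

definition poisson :: "phfun \<Rightarrow> phfun \<Rightarrow> phfun" where
  "poisson f g r ps pr pps =
     d_r f r ps pr pps * d_pr g r ps pr pps - d_pr f r ps pr pps * d_r g r ps pr pps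
   + d_psi f r ps pr pps * d_ppsi g r ps pr pps - d_ppsi f r ps pr pps * d_psi g r ps pr pps"

definition H_g :: phfun where
  "H_g r ps pr pps = (pr\<^sup>2 + pps\<^sup>2 / r\<^sup>2) / 2"

definition constant_of_motion :: "phfun \<Rightarrow> phfun \<Rightarrow> bool" where
  "constant_of_motion H f \<longleftrightarrow> (\<forall>r ps pr pps. r > 0 \<longrightarrow> poisson f H r ps pr pps = 0)"

definition opD :: "nat \<Rightarrow> phfun \<Rightarrow> phfun" where
  "opD lam f r ps pr pps = pr * f r ps pr pps + pps / (real lam * r) * d_psi f r ps pr pps"

end

theory Submission
  imports Defs
begin

(* Write W = p_r + i p_psi / r for the complex radial momentum and
   E = exp (i (lam psi + psi0)), so that cos (lam psi + psi0) = Re E.  Since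
   d/dpsi E = i lam E, the operator D = p_r + p_psi/(lam r) d/dpsi acts on
   F_k = Re (W^k E) as multiplication by W inside the real part, hence
   D^k cos (lam psi + psi0) = F_k.  Computing the four partial derivatives of
   F_k (each the real part of a complex derivative) gives the bracket formula
   {F_k, H_g} = (lam - k) (p_psi / r^2) Re (i W^k E),
   which vanishes exactly for k = lam; this is the theorem. *)

lemma deriv_Re_of_real:
  assumes "(h has_field_derivative D) (at (of_real x))"
  shows "deriv (\<lambda>t. Re (h (of_real t))) x = Re D"
proof -
  have "((\<lambda>t. h (of_real t)) has_vector_derivative D) (at x)"
    using has_vector_derivative_real_field[OF assms] by simp
  then have "((\<lambda>t. Re (h (of_real t))) has_derivative (\<lambda>t. Re (t *\<^sub>R D))) (at x)"
    unfolding has_vector_derivative_def by (rule has_derivative_Re)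
  moreover have "(\<lambda>t. Re (t *\<^sub>R D)) = (*) (Re D)"
    by (auto simp: mult.commute)
  ultimately have "((\<lambda>t. Re (h (of_real t))) has_real_derivative Re D) (at x)"
    unfolding has_field_derivative_def by simp
  then show ?thesis by (rule DERIV_imp_deriv)
qed

definition cmom :: "real \<Rightarrow> real \<Rightarrow> real \<Rightarrow> complex" where
  "cmom r pr pps = of_real pr + \<i> * of_real (pps / r)"

definition phase :: "real \<Rightarrow> real \<Rightarrow> real \<Rightarrow> complex" where
  "phase lam psi0 ps = exp (\<i> * (of_real lam * of_real ps + of_real psi0))"

definition wave :: "real \<Rightarrow> real \<Rightarrow> nat \<Rightarrow> phfun" where
  "wave lam psi0 k r ps pr pps = Re (cmom r pr pps ^ k * phase lam psi0 ps)"

lemma wave_0: "wave lam psi0 0 = (\<lambda>r ps pr pps. cos (lam * ps + psi0))"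
proof (intro ext)
  fix r ps pr pps
  have "phase lam psi0 ps = cis (lam * ps + psi0)"
    by (simp add: phase_def cis_conv_exp algebra_simps)
  then show "wave lam psi0 0 r ps pr pps = cos (lam * ps + psi0)"
    by (simp add: wave_def)
qed

lemma d_psi_wave:
  "d_psi (wave lam psi0 k) r ps pr pps
     = Re (cmom r pr pps ^ k * (\<i> * of_real lam) * phase lam psi0 ps)"
proof -
  have "((\<lambda>z. cmom r pr pps ^ k * exp (\<i> * (of_real lam * z + of_real psi0)))
          has_field_derivative cmom r pr pps ^ k * (\<i> * of_real lam) * phase lam psi0 ps)
        (at (of_real ps))"
    unfolding phase_def by (auto intro!: derivative_eq_intros simp: algebra_simps)
  then show ?thesis
    unfolding d_psi_def wave_def phase_def by (rule deriv_Re_of_real)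
qed

lemma opD_wave:
  assumes "lam > 0"
  shows "opD lam (wave (real lam) psi0 k) = wave (real lam) psi0 (Suc k)"
proof (intro ext)
  fix r ps pr pps
  define A where "A = cmom r pr pps ^ k * phase lam psi0 ps"
  have "opD lam (wave lam psi0 k) r ps pr pps
      = pr * Re A + pps / (real lam * r) * Re (A * (\<i> * of_real lam))"
    unfolding opD_def d_psi_wave by (simp add: wave_def A_def mult_ac)
  also have "\<dots> = Re (A * cmom r pr pps)"
    using assms by (cases "r = 0") (simp_all add: cmom_def field_simps)
  also have "\<dots> = wave lam psi0 (Suc k) r ps pr pps"
    by (simp add: wave_def A_def mult_ac)
  finally show "opD lam (wave lam psi0 k) r ps pr pps = wave lam psi0 (Suc k) r ps pr pps" .
qed

lemma iterate_opD:
  assumes "lam > 0"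
  shows "(opD lam ^^ k) (\<lambda>r ps pr pps. cos (real lam * ps + psi0)) = wave (real lam) psi0 k"
  by (induction k) (simp_all add: wave_0 opD_wave[OF assms])

lemma d_r_wave:
  assumes "r > 0"
  shows "d_r (wave lam psi0 k) r ps pr pps
     = Re (of_nat k * cmom r pr pps ^ (k - 1) * (- \<i> * of_real pps / (of_real r)\<^sup>2)
           * phase lam psi0 ps)"
proof -
  have "((\<lambda>z. (of_real pr + \<i> * (of_real pps / z)) ^ k * phase lam psi0 ps)
          has_field_derivative of_nat k * cmom r pr pps ^ (k - 1)
             * (- \<i> * of_real pps / (of_real r)\<^sup>2) * phase lam psi0 ps) (at (of_real r))"
    using assms by (auto intro!: derivative_eq_intros simp: cmom_def field_simps power2_eq_square)
  moreover have "(\<lambda>x. wave lam psi0 k x ps pr pps)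
      = (\<lambda>x. Re ((\<lambda>z. (of_real pr + \<i> * (of_real pps / z)) ^ k * phase lam psi0 ps) (of_real x)))"
    by (simp add: wave_def cmom_def)
  ultimately show ?thesis
    unfolding d_r_def by (simp only:) (rule deriv_Re_of_real)
qed

lemma d_pr_wave:
  "d_pr (wave lam psi0 k) r ps pr pps
     = Re (of_nat k * cmom r pr pps ^ (k - 1) * phase lam psi0 ps)"
proof -
  have "((\<lambda>z. (z + \<i> * of_real (pps / r)) ^ k * phase lam psi0 ps)
          has_field_derivative of_nat k * cmom r pr pps ^ (k - 1) * phase lam psi0 ps)
        (at (of_real pr))"
    by (auto intro!: derivative_eq_intros simp: cmom_def)
  moreover have "(\<lambda>x. wave lam psi0 k r ps x pps)
      = (\<lambda>x. Re ((\<lambda>z. (z + \<i> * of_real (pps / r)) ^ k * phase lam psi0 ps) (of_real x)))"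
    by (simp add: wave_def cmom_def)
  ultimately show ?thesis
    unfolding d_pr_def by (simp only:) (rule deriv_Re_of_real)
qed

lemma d_ppsi_wave:
  assumes "r > 0"
  shows "d_ppsi (wave lam psi0 k) r ps pr pps
     = Re (of_nat k * cmom r pr pps ^ (k - 1) * (\<i> / of_real r) * phase lam psi0 ps)"
proof -
  have "((\<lambda>z. (of_real pr + z * (\<i> / of_real r)) ^ k * phase lam psi0 ps)
          has_field_derivative of_nat k * cmom r pr pps ^ (k - 1) * (\<i> / of_real r)
             * phase lam psi0 ps) (at (of_real pps))"
    using assms by (auto intro!: derivative_eq_intros simp: cmom_def of_real_divide mult.commute)
  moreover have "(\<lambda>x. wave lam psi0 k r ps pr x)
      = (\<lambda>x. Re ((\<lambda>z. (of_real pr + z * (\<i> / of_real r)) ^ k * phase lam psi0 ps) (of_real x)))"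
    by (simp add: wave_def cmom_def of_real_divide mult.commute)
  ultimately show ?thesis
    unfolding d_ppsi_def by (simp only:) (rule deriv_Re_of_real)
qed

lemma partials_H_g:
  assumes "r > 0"
  shows "d_r H_g r ps pr pps = - (pps\<^sup>2 / r ^ 3)"
    and "d_pr H_g r ps pr pps = pr"
    and "d_psi H_g r ps pr pps = 0"
    and "d_ppsi H_g r ps pr pps = pps / r\<^sup>2"
proof -
  have "((\<lambda>x. H_g x ps pr pps) has_real_derivative - (pps\<^sup>2 / r ^ 3)) (at r)"
    unfolding H_g_def using assms
    by (auto intro!: derivative_eq_intros simp: field_simps power2_eq_square power3_eq_cube)
  then show "d_r H_g r ps pr pps = - (pps\<^sup>2 / r ^ 3)"
    unfolding d_r_def by (rule DERIV_imp_deriv)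
  have "((\<lambda>x. H_g r ps x pps) has_real_derivative pr) (at pr)"
    unfolding H_g_def by (auto intro!: derivative_eq_intros)
  then show "d_pr H_g r ps pr pps = pr"
    unfolding d_pr_def by (rule DERIV_imp_deriv)
  show "d_psi H_g r ps pr pps = 0"
    unfolding d_psi_def H_g_def by simp
  have "((\<lambda>x. H_g r ps pr x) has_real_derivative pps / r\<^sup>2) (at pps)"
    unfolding H_g_def using assms by (auto intro!: derivative_eq_intros simp: field_simps)
  then show "d_ppsi H_g r ps pr pps = pps / r\<^sup>2"
    unfolding d_ppsi_def by (rule DERIV_imp_deriv)
qed

lemma poisson_wave_H_g:
  assumes "r > 0"
  shows "poisson (wave lam psi0 k) H_g r ps pr pps
     = (lam - real k) * (pps / r\<^sup>2) * Re (\<i> * cmom r pr pps ^ k * phase lam psi0 ps)"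
proof -
  define W V E where "W = cmom r pr pps" and "V = W ^ (k - 1)" and "E = phase lam psi0 ps"
  \<comment> \<open>k W^(k-1) W = k W^k also for k = 0\<close>
  have kV: "of_nat k * V * W = of_nat k * W ^ k"
    unfolding V_def by (cases k) (simp_all add: mult_ac)
  have "poisson (wave lam psi0 k) H_g r ps pr pps
      = Re (of_nat k * V * E * ((- \<i> * of_real pps / (of_real r)\<^sup>2) * of_real pr
          + of_real (pps\<^sup>2 / r ^ 3)) + W ^ k * (\<i> * of_real lam) * E * of_real (pps / r\<^sup>2))"
    unfolding poisson_def d_r_wave[OF assms] d_pr_wave d_ppsi_wave[OF assms] d_psi_wave
      partials_H_g[OF assms]
    unfolding W_def[symmetric] E_def[symmetric] unfolding V_def[symmetric]
    by (simp add: algebra_simps add_divide_distrib diff_divide_distrib)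
  \<comment> \<open>the r- and p_r-contributions combine to -i (p_psi / r^2) W, which
      cancels the psi-contribution i lam (p_psi / r^2) W^k up to the factor lam - k\<close>
  also have "(- \<i> * of_real pps / (of_real r)\<^sup>2) * of_real pr + of_real (pps\<^sup>2 / r ^ 3)
      = - \<i> * of_real (pps / r\<^sup>2) * W"
    using assms by (simp add: W_def cmom_def field_simps power2_eq_square power3_eq_cube)
  also have "of_nat k * V * E * (- \<i> * of_real (pps / r\<^sup>2) * W)
      = - \<i> * of_real (pps / r\<^sup>2) * E * (of_nat k * V * W)"
    by (simp only: mult_ac)
  also have "- \<i> * of_real (pps / r\<^sup>2) * E * (of_nat k * V * W)
        + W ^ k * (\<i> * of_real lam) * E * of_real (pps / r\<^sup>2)
      = of_real ((lam - real k) * (pps / r\<^sup>2)) * (\<i> * W ^ k * E)"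
    unfolding kV by (simp add: algebra_simps diff_divide_distrib)
  finally show ?thesis
    by (simp add: E_def W_def)
qed

theorem mainTheorem5:
  fixes lam :: nat and psi0 :: real
  assumes "lam > 0"
  shows "constant_of_motion H_g
           ((opD lam ^^ lam) (\<lambda>r ps pr pps. cos (real lam * ps + psi0)))"
  unfolding iterate_opD[OF assms] constant_of_motion_def
  by (simp add: poisson_wave_H_g)

end
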